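(* Let $\mathcal{B}$ be a real Banach space having a pre-dual space $\mathcal{B}_*$, let $\nu_j\in\mathcal{B}_*$, $j\in\mathbb{N}_m$, be linearly independent, and let $\mathbf{y}\in\mathbb{R}^m\setminus\{0\}$. For $\mathbf{c}\in\mathbb{R}^m$ put $\mathcal{L}^*(\mathbf{c}):=\sum_{j\in\mathbb{N}_m}c_j\nu_j$. Then $\hat{\mathbf{c}}\in\mathbb{R}^m\setminus\{0\}$ is a solution of $$\inf\{\|\mathcal{L}^*(\mathbf{c})\|_{\mathcal{B}_*}:\ \langle\mathbf{c},\mathbf{y}\rangle_{\mathbb{R}^m}=1,\ \mathbf{c}\in\mathbb{R}^m\}\qquad(\mathrm{D})$$ if and only if $$\frac{1}{\|\mathcal{L}^*(\hat{\mathbf{c}})\|_{\mathcal{B}_*}}\,\partial\|\cdot\|_{\mathcal{B}_*}(\mathcal{L}^*(\hat{\mathbf{c}}))\cap\mathcal{M}_{\mathbf{y}}\neq\emptyset.$$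
   Context: $\mathcal{B}$ is a real Banach space with dual $\mathcal{B}^*$ and pairing $\langle\nu,f\rangle_{\mathcal{B}}:=\nu(f)$; $\mathbb{N}_m:=\{1,\dots,m\}$; $\mathcal{L}(f):=[\langle\nu_j,f\rangle_{\mathcal{B}}:j\in\mathbb{N}_m]$, $\mathcal{M}_{\mathbf{y}}:=\{f\in\mathcal{B}:\mathcal{L}(f)=\mathbf{y}\}$. A normed space $\mathcal{B}_*$ is a pre-dual of $\mathcal{B}$ if $(\mathcal{B}_* )^*=\mathcal{B}$, with $\langle\nu,f\rangle_{\mathcal{B}}=f(\nu)$ for $\nu\in\mathcal{B}_*$. For a convex $\phi$ on a real normed space $X$, $\partial\phi(x):=\{\mu\in X^*:\phi(z)-\phi(x)\ge\mu(z-x)\ \forall z\in X\}$; so $\partial\|\cdot\|_{\mathcal{B}_*}(\nu)\subseteq\mathcal{B}$. *)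

theory Defs
  imports "HOL-Analysis.Analysis"
begin

text \<open>The pre-dual B_* is modelled by a real normed space of type 'p; the Banach space
  B = (B_*)^* is modelled (up to isometric isomorphism) by the bounded linear functionals
  'p \<Rightarrow>L real, with pairing f(nu).\<close>

definition Lstar :: "('m::finite \<Rightarrow> 'p::real_normed_vector) \<Rightarrow> real^'m \<Rightarrow> 'p" where
  "Lstar \<nu> c = (\<Sum>j\<in>UNIV. (c $ j) *\<^sub>R \<nu> j)"

definition subdiff :: "('a::real_normed_vector \<Rightarrow> real) \<Rightarrow> 'a \<Rightarrow> ('a \<Rightarrow>\<^sub>L real) set" where
  "subdiff \<phi> x = {\<mu>. \<forall>z. \<phi> z - \<phi> x \<ge> blinfun_apply \<mu> (z - x)}"

definition Mset :: "('m::finite \<Rightarrow> 'p::real_normed_vector) \<Rightarrow> real^'m \<Rightarrow> ('p \<Rightarrow>\<^sub>L real) set" where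
  "Mset \<nu> y = {f. \<forall>j. blinfun_apply f (\<nu> j) = y $ j}"

definition lin_indep_family :: "('m::finite \<Rightarrow> 'p::real_normed_vector) \<Rightarrow> bool" where
  "lin_indep_family \<nu> \<longleftrightarrow> (\<forall>c::'m \<Rightarrow> real. (\<Sum>j\<in>UNIV. c j *\<^sub>R \<nu> j) = 0 \<longrightarrow> (\<forall>j. c j = 0))"

definition dual_solution :: "('m::finite \<Rightarrow> 'p::real_normed_vector) \<Rightarrow> real^'m \<Rightarrow> real^'m \<Rightarrow> bool" where
  "dual_solution \<nu> y c \<longleftrightarrow> c \<bullet> y = 1 \<and>
     norm (Lstar \<nu> c) = Inf {norm (Lstar \<nu> d) | d. d \<bullet> y = 1}"

end

theory Submission
  imports Defs
begin

text \<open>Write \<open>n = \<parallel>L\<^sup>*(c)\<parallel>\<close>, which is positive by linear independence. If \<open>c\<close> solves (D), rescaling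
  any \<open>d\<close> with \<open>\<langle>d, y\<rangle> > 0\<close> to the constraint set gives \<open>n \<langle>d, y\<rangle> \<le> \<parallel>L\<^sup>*(d)\<parallel>\<close> for all \<open>d\<close>. Hence
  \<open>L\<^sup>*(d) \<mapsto> n \<langle>d, y\<rangle>\<close> is a well defined linear functional of norm at most 1 on the range of \<open>L\<^sup>*\<close>, and a
  Hahn-Banach extension \<open>\<mu>\<close> of it satisfies \<open>\<mu>(L\<^sup>*(c)) = n = \<parallel>L\<^sup>*(c)\<parallel>\<close>, i.e. it is a subgradient of the
  norm at \<open>L\<^sup>*(c)\<close>, while \<open>\<mu>(\<nu>\<^sub>j) = n y\<^sub>j\<close> says \<open>\<mu> / n \<in> M\<^sub>y\<close>. Conversely, subgradients of the norm
  at \<open>x\<close> are exactly the functionals bounded by the norm that take the value \<open>\<parallel>x\<parallel>\<close> at \<open>x\<close>; if such a \<open>\<mu>\<close>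
  satisfies \<open>\<mu> / n \<in> M\<^sub>y\<close>, then \<open>n \<langle>d, y\<rangle> = \<mu>(L\<^sup>*(d)) \<le> \<parallel>L\<^sup>*(d)\<parallel>\<close>, so \<open>c\<close> is optimal.\<close>

section \<open>Hahn-Banach extension of dominated linear functionals\<close>

definition sublinear :: "('a::real_vector \<Rightarrow> real) \<Rightarrow> bool" where
  "sublinear p \<longleftrightarrow> (\<forall>x y. p (x + y) \<le> p x + p y) \<and> (\<forall>a x. 0 \<le> a \<longrightarrow> p (a *\<^sub>R x) = a * p x)"

definition dominated_linear_on :: "'a::real_vector set \<Rightarrow> ('a \<Rightarrow> real) \<Rightarrow> ('a \<Rightarrow> real) \<Rightarrow> bool" where
  "dominated_linear_on T p h \<longleftrightarrow> subspace T \<and>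
     (\<forall>x\<in>T. \<forall>y\<in>T. h (x + y) = h x + h y) \<and> (\<forall>x\<in>T. \<forall>a. h (a *\<^sub>R x) = a * h x) \<and>
     (\<forall>x\<in>T. h x \<le> p x)"

lemma sublinear_scaled_norm: "0 \<le> K \<Longrightarrow> sublinear (\<lambda>x. K * norm x)"
  unfolding sublinear_def
  by (auto simp: mult_left_mono norm_triangle_ineq simp flip: distrib_left)

lemma dominated_linear_on_extension_value:
  assumes p: "sublinear p" and h: "dominated_linear_on T p h"
  shows "\<exists>\<xi>. \<forall>t\<in>T. \<forall>a. h t + a * \<xi> \<le> p (t + a *\<^sub>R x0)"
proof -
  have sub: "subspace T" and hadd: "\<And>u v. u \<in> T \<Longrightarrow> v \<in> T \<Longrightarrow> h (u + v) = h u + h v"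
    and hscale: "\<And>u a. u \<in> T \<Longrightarrow> h (a *\<^sub>R u) = a * h u" and hp: "\<And>u. u \<in> T \<Longrightarrow> h u \<le> p u"
    using h unfolding dominated_linear_on_def by auto
  have padd: "\<And>u v. p (u + v) \<le> p u + p v"
    and pscale: "\<And>a u. 0 \<le> a \<Longrightarrow> p (a *\<^sub>R u) = a * p u"
    using p unfolding sublinear_def by auto
  \<comment> \<open>lower bounds for the value at \<open>x0\<close> never exceed upper bounds\<close>
  have separated: "h u - p (u - x0) \<le> p (v + x0) - h v" if "u \<in> T" "v \<in> T" for u v
  proof -
    have "h u + h v = h (u + v)" using hadd that by simp
    also have "\<dots> \<le> p ((u - x0) + (v + x0))" using hp that subspace_add[OF sub] by simp
    also have "\<dots> \<le> p (u - x0) + p (v + x0)" by (rule padd)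
    finally show ?thesis by simp
  qed
  define \<xi> where "\<xi> = Sup {h u - p (u - x0) | u. u \<in> T}"
  have T0: "0 \<in> T" using sub by (rule subspace_0)
  have lower: "h u - p (u - x0) \<le> \<xi>" if "u \<in> T" for u
    unfolding \<xi>_def using that separated T0 by (intro cSup_upper) (auto simp: bdd_above_def)
  have upper: "\<xi> \<le> p (v + x0) - h v" if "v \<in> T" for v
    unfolding \<xi>_def using that separated T0 by (intro cSup_least) auto
  have "h t + a * \<xi> \<le> p (t + a *\<^sub>R x0)" if t: "t \<in> T" for t a
  proof (cases a "0::real" rule: linorder_cases)
    case less
    define b where "b = - a"
    define u where "u = (1 / b) *\<^sub>R t"
    have b: "b > 0" using less by (simp add: b_def)
    have u: "u \<in> T" using t sub by (simp add: u_def subspace_scale)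
    have "b *\<^sub>R u = t" using b by (simp add: u_def)
    then have "h t = b * h u" and "p (t + a *\<^sub>R x0) = b * p (u - x0)"
      using hscale[OF u, of b] pscale[of b "u - x0"] b by (auto simp: b_def scaleR_diff_right)
    moreover have "b * (h u - p (u - x0)) \<le> b * \<xi>"
      using lower[OF u] b by (intro mult_left_mono) auto
    ultimately show ?thesis by (simp add: b_def right_diff_distrib)
  next
    case equal
    then show ?thesis using hp t by simp
  next
    case greater
    define u where "u = (1 / a) *\<^sub>R t"
    have u: "u \<in> T" using t sub by (simp add: u_def subspace_scale)
    have "a *\<^sub>R u = t" using greater by (simp add: u_def)
    then have "h t = a * h u" and "p (t + a *\<^sub>R x0) = a * p (u + x0)"
      using hscale[OF u, of a] pscale[of a "u + x0"] greater by (auto simp: scaleR_add_right)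
    moreover have "a * \<xi> \<le> a * (p (u + x0) - h u)"
      using upper[OF u] greater by (intro mult_left_mono) auto
    ultimately show ?thesis by (simp add: right_diff_distrib)
  qed
  then show ?thesis by blast
qed

lemma dominated_linear_on_extend:
  assumes h: "dominated_linear_on T p h" and x0: "x0 \<notin> T"
    and \<xi>: "\<forall>t\<in>T. \<forall>a. h t + a * \<xi> \<le> p (t + a *\<^sub>R x0)"
  shows "\<exists>h'. dominated_linear_on (span (insert x0 T)) p h' \<and> (\<forall>x\<in>T. h' x = h x)"
proof -
  have sub: "subspace T" and hadd: "\<And>u v. u \<in> T \<Longrightarrow> v \<in> T \<Longrightarrow> h (u + v) = h u + h v"
    and hscale: "\<And>u a. u \<in> T \<Longrightarrow> h (a *\<^sub>R u) = a * h u"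
    using h unfolding dominated_linear_on_def by auto
  have coeff_unique: "a = b" if "z - a *\<^sub>R x0 \<in> T" "z - b *\<^sub>R x0 \<in> T" for z a b
  proof (rule ccontr)
    assume "a \<noteq> b"
    have "(1 / (a - b)) *\<^sub>R ((z - b *\<^sub>R x0) - (z - a *\<^sub>R x0)) \<in> T"
      using subspace_scale[OF sub subspace_diff[OF sub that(2,1)]] .
    moreover have "(1 / (a - b)) *\<^sub>R ((z - b *\<^sub>R x0) - (z - a *\<^sub>R x0)) = x0"
      using \<open>a \<noteq> b\<close> by (simp add: algebra_simps flip: scaleR_diff_left)
    ultimately show False using x0 by simp
  qed
  define h' where "h' z = (let a = THE a. z - a *\<^sub>R x0 \<in> T in h (z - a *\<^sub>R x0) + a * \<xi>)" for z
  have h'_eq: "h' z = h (z - a *\<^sub>R x0) + a * \<xi>" if "z - a *\<^sub>R x0 \<in> T" for z a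
  proof -
    have "(THE a. z - a *\<^sub>R x0 \<in> T) = a"
      using that coeff_unique by blast
    then show ?thesis by (simp add: h'_def)
  qed
  have span_iff: "z \<in> span (insert x0 T) \<longleftrightarrow> (\<exists>a. z - a *\<^sub>R x0 \<in> T)" for z
    by (simp add: span_breakdown_eq span_eq_iff[THEN iffD2, OF sub])
  have "dominated_linear_on (span (insert x0 T)) p h'"
    unfolding dominated_linear_on_def
  proof (intro conjI ballI allI)
    show "subspace (span (insert x0 T))" by (rule subspace_span)
  next
    fix z w assume "z \<in> span (insert x0 T)" "w \<in> span (insert x0 T)"
    then obtain a b where a: "z - a *\<^sub>R x0 \<in> T" and b: "w - b *\<^sub>R x0 \<in> T"
      by (auto simp: span_iff)
    have "(z + w) - (a + b) *\<^sub>R x0 = (z - a *\<^sub>R x0) + (w - b *\<^sub>R x0)"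
      by (simp add: algebra_simps)
    then show "h' (z + w) = h' z + h' w"
      using a b h'_eq[OF a] h'_eq[OF b] h'_eq[of "z + w" "a + b"] hadd[OF a b] subspace_add[OF sub a b]
      by (simp add: algebra_simps)
  next
    fix z r assume "z \<in> span (insert x0 T)"
    then obtain a where a: "z - a *\<^sub>R x0 \<in> T" by (auto simp: span_iff)
    have "r *\<^sub>R z - (r * a) *\<^sub>R x0 = r *\<^sub>R (z - a *\<^sub>R x0)"
      by (simp add: algebra_simps)
    then have "h' (r *\<^sub>R z) = h (r *\<^sub>R (z - a *\<^sub>R x0)) + (r * a) * \<xi>"
      using h'_eq[of "r *\<^sub>R z" "r * a"] subspace_scale[OF sub a] by simp
    also have "\<dots> = r * h' z"
      using hscale[OF a, of r] h'_eq[OF a] by (simp add: distrib_left)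
    finally show "h' (r *\<^sub>R z) = r * h' z" .
  next
    fix z assume "z \<in> span (insert x0 T)"
    then obtain a where a: "z - a *\<^sub>R x0 \<in> T" by (auto simp: span_iff)
    show "h' z \<le> p z"
      using \<xi> a h'_eq[OF a] by (metis diff_add_cancel)
  qed
  moreover have "\<forall>x\<in>T. h' x = h x"
    using h'_eq[of _ 0] by simp
  ultimately show ?thesis by blast
qed

lemma dominated_linear_on_cong:
  "(\<And>x. x \<in> T \<Longrightarrow> h x = h' x) \<Longrightarrow> dominated_linear_on T p h \<longleftrightarrow> dominated_linear_on T p h'"
  unfolding dominated_linear_on_def by (simp add: subspace_add subspace_scale cong: conj_cong)

lemma graph_subset_graph_iff:
  "(\<lambda>x. (x, f x)) ` A \<subseteq> (\<lambda>x. (x, g x)) ` B \<longleftrightarrow> A \<subseteq> B \<and> (\<forall>x\<in>A. f x = g x)"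
  by auto

lemma chain_subset_common_member:
  assumes "chain\<^sub>\<subseteq> C" "P \<in> \<Union>C" "Q \<in> \<Union>C"
  shows "\<exists>G\<in>C. P \<in> G \<and> Q \<in> G"
proof -
  obtain G1 G2 where "G1 \<in> C" "G2 \<in> C" "P \<in> G1" "Q \<in> G2" using assms(2,3) by blast
  moreover have "G1 \<subseteq> G2 \<or> G2 \<subseteq> G1"
    using assms(1) \<open>G1 \<in> C\<close> \<open>G2 \<in> C\<close> unfolding chain_subset_def by blast
  ultimately show ?thesis by blast
qed

lemma Union_chain_of_graphs:
  assumes C: "chain\<^sub>\<subseteq> C" and graphs: "\<And>G. G \<in> C \<Longrightarrow> \<exists>T h. G = (\<lambda>x. (x, h x)) ` T"
  obtains h where "\<Union>C = (\<lambda>x. (x, h x)) ` Domain (\<Union>C)"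
proof
  have functional: "r = s" if rs: "(x, r) \<in> \<Union>C" "(x, s) \<in> \<Union>C" for x r s
  proof -
    obtain G where G: "G \<in> C" "(x, r) \<in> G" "(x, s) \<in> G"
      using chain_subset_common_member[OF C rs] by blast
    obtain T h where "G = (\<lambda>x. (x, h x)) ` T" using graphs[OF G(1)] by blast
    with G show ?thesis by blast
  qed
  define h where "h x = (THE r. (x, r) \<in> \<Union>C)" for x
  have h_eq: "h x = r" if "(x, r) \<in> \<Union>C" for x r
    unfolding h_def using that functional by blast
  show "\<Union>C = (\<lambda>x. (x, h x)) ` Domain (\<Union>C)"
  proof (intro equalityI subsetI)
    fix P assume P: "P \<in> \<Union>C"
    then have "P = (fst P, h (fst P))" and "fst P \<in> Domain (\<Union>C)"
      using h_eq[of "fst P" "snd P"] by (simp_all add: Domain_fst)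
    then show "P \<in> (\<lambda>x. (x, h x)) ` Domain (\<Union>C)" by (rule image_eqI)
  next
    fix P assume "P \<in> (\<lambda>x. (x, h x)) ` Domain (\<Union>C)"
    then obtain x r where "(x, r) \<in> \<Union>C" "P = (x, h x)" unfolding Domain_iff by blast
    then show "P \<in> \<Union>C" using h_eq by simp
  qed
qed

text \<open>Partial extensions are compared through their graphs, so that Zorn's lemma for set inclusion
  applies.\<close>

definition dominated_extensions ::
    "'a::real_vector set \<Rightarrow> ('a \<Rightarrow> real) \<Rightarrow> ('a \<Rightarrow> real) \<Rightarrow> ('a \<times> real) set set" where
  "dominated_extensions S g p =
     {(\<lambda>x. (x, h x)) ` T | T h. dominated_linear_on T p h \<and> S \<subseteq> T \<and> (\<forall>x\<in>S. h x = g x)}"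

lemma Union_chain_dominated_extensions:
  assumes C: "C \<in> chains (dominated_extensions S g p)" and "C \<noteq> {}"
  shows "\<Union>C \<in> dominated_extensions S g p"
proof -
  have chain: "chain\<^sub>\<subseteq> C" using C by (simp add: chains_def)
  have graphs: "\<exists>TG hG. G = (\<lambda>x. (x, hG x)) ` TG \<and> dominated_linear_on TG p hG \<and> S \<subseteq> TG \<and>
      (\<forall>x\<in>S. hG x = g x)" if "G \<in> C" for G
  proof -
    have "G \<in> dominated_extensions S g p" using C that unfolding chains_def by blast
    then show ?thesis unfolding dominated_extensions_def by blast
  qed
  define T where "T = Domain (\<Union>C)"
  obtain h where U: "\<Union>C = (\<lambda>x. (x, h x)) ` T"
    unfolding T_def using Union_chain_of_graphs[OF chain] graphs by meson
  have members: "\<exists>TG \<subseteq> T. G = (\<lambda>x. (x, h x)) ` TG \<and> dominated_linear_on TG p h \<and> S \<subseteq> TG \<and>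
      (\<forall>x\<in>S. h x = g x)" if G: "G \<in> C" for G
  proof -
    obtain TG hG where TG: "G = (\<lambda>x. (x, hG x)) ` TG" "dominated_linear_on TG p hG" "S \<subseteq> TG"
      "\<forall>x\<in>S. hG x = g x"
      using graphs[OF G] by blast
    have "G \<subseteq> (\<lambda>x. (x, h x)) ` T" using G U by blast
    then have "TG \<subseteq> T" and "\<forall>x\<in>TG. hG x = h x"
      unfolding TG(1) graph_subset_graph_iff by simp_all
    then show ?thesis
      using TG dominated_linear_on_cong[of TG hG h p] by (intro exI[of _ TG]) (auto simp: subset_iff)
  qed
  have pairs: "\<exists>TG \<subseteq> T. x \<in> TG \<and> y \<in> TG \<and> dominated_linear_on TG p h" if "x \<in> T" "y \<in> T" for x y
  proof -
    have "(x, h x) \<in> \<Union>C" "(y, h y) \<in> \<Union>C" using that U by auto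
    then obtain G where "G \<in> C" "(x, h x) \<in> G" "(y, h y) \<in> G"
      using chain_subset_common_member[OF chain] by blast
    with members[of G] show ?thesis by blast
  qed
  obtain G0 where "G0 \<in> C" using \<open>C \<noteq> {}\<close> by blast
  then obtain T0 where T0: "T0 \<subseteq> T" "dominated_linear_on T0 p h" "S \<subseteq> T0" "\<forall>x\<in>S. h x = g x"
    using members by meson
  have "dominated_linear_on T p h"
    unfolding dominated_linear_on_def subspace_def
  proof (intro conjI ballI allI)
    show "0 \<in> T" using T0 unfolding dominated_linear_on_def by (auto intro: subspace_0)
  next
    fix x y assume "x \<in> T" "y \<in> T"
    then obtain TG where "TG \<subseteq> T" "x \<in> TG" "y \<in> TG" "dominated_linear_on TG p h"
      using pairs[of x y] by blast
    then show "x + y \<in> T" and "h (x + y) = h x + h y"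
      unfolding dominated_linear_on_def by (auto dest: subspace_add)
  next
    fix x a assume "x \<in> T"
    then obtain TG where "TG \<subseteq> T" "x \<in> TG" "dominated_linear_on TG p h"
      using pairs[of x x] by blast
    then show "a *\<^sub>R x \<in> T" and "h (a *\<^sub>R x) = a * h x" and "h x \<le> p x"
      unfolding dominated_linear_on_def by (auto dest: subspace_scale)
  qed
  then show ?thesis
    unfolding dominated_extensions_def using U T0 by blast
qed

theorem hahn_banach_sublinear:
  assumes p: "sublinear p" and g: "dominated_linear_on S p g"
  obtains h where "linear h" "\<And>x. x \<in> S \<Longrightarrow> h x = g x" "\<And>x. h x \<le> p x"
proof -
  let ?A = "dominated_extensions S g p"
  have graph_g: "(\<lambda>x. (x, g x)) ` S \<in> ?A"
    unfolding dominated_extensions_def using g by auto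
  have "\<exists>U\<in>?A. \<forall>X\<in>C. X \<subseteq> U" if C: "C \<in> chains ?A" for C
  proof (cases "C = {}")
    case True
    then show ?thesis using graph_g by blast
  next
    case False
    then show ?thesis using Union_chain_dominated_extensions[OF C False] by blast
  qed
  then obtain M where "M \<in> ?A" and maximal: "\<forall>X\<in>?A. M \<subseteq> X \<longrightarrow> X = M"
    using Zorn_Lemma2[of ?A] by blast
  then obtain T h where M: "M = (\<lambda>x. (x, h x)) ` T" and h: "dominated_linear_on T p h"
    and ST: "S \<subseteq> T" and hg: "\<forall>x\<in>S. h x = g x"
    unfolding dominated_extensions_def by auto
  have "T = UNIV"
  proof (rule ccontr)
    assume "T \<noteq> UNIV"
    then obtain x0 where x0: "x0 \<notin> T" by blast
    obtain \<xi> where "\<forall>t\<in>T. \<forall>a. h t + a * \<xi> \<le> p (t + a *\<^sub>R x0)"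
      using dominated_linear_on_extension_value[OF p h] by blast
    then obtain h' where h': "dominated_linear_on (span (insert x0 T)) p h'" and h'h: "\<forall>x\<in>T. h' x = h x"
      using dominated_linear_on_extend[OF h x0] by blast
    let ?M' = "(\<lambda>x. (x, h' x)) ` span (insert x0 T)"
    have T_span: "T \<subseteq> span (insert x0 T)" by (simp add: span_base subsetI)
    have "?M' \<in> ?A"
      unfolding dominated_extensions_def using h' ST T_span hg h'h
      by (intro CollectI exI[of _ "span (insert x0 T)"] exI[of _ h']) auto
    moreover have "M \<subseteq> ?M'" unfolding M graph_subset_graph_iff using T_span h'h by simp
    ultimately have "?M' = M" using maximal by blast
    then have "fst ` ?M' = fst ` M" by simp
    then have "span (insert x0 T) = T" using M by (simp add: image_image)
    then show False using x0 span_base[of x0 "insert x0 T"] by auto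
  qed
  then have hadd: "\<And>x y. h (x + y) = h x + h y" and hscale: "\<And>a x. h (a *\<^sub>R x) = a * h x"
    and hp: "\<And>x. h x \<le> p x"
    using h unfolding dominated_linear_on_def by simp_all
  have "linear h" by (rule linearI) (simp_all add: hadd hscale)
  then show thesis using hg hp that by blast
qed

corollary hahn_banach_blinfun:
  fixes S :: "'a::real_normed_vector set"
  assumes g: "dominated_linear_on S (\<lambda>x. K * norm x) g" and K: "0 \<le> K"
  obtains \<mu> :: "'a \<Rightarrow>\<^sub>L real" where "\<And>x. x \<in> S \<Longrightarrow> blinfun_apply \<mu> x = g x" "norm \<mu> \<le> K"
proof -
  obtain h where h: "linear h" and hg: "\<And>x. x \<in> S \<Longrightarrow> h x = g x" and hK: "\<And>x. h x \<le> K * norm x"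
    using hahn_banach_sublinear[OF sublinear_scaled_norm[OF K] g] by blast
  have abs_le: "\<bar>h x\<bar> \<le> K * norm x" for x
    using hK[of x] hK[of "- x"] linear_neg[OF h, of x] by simp
  have "bounded_linear h"
    using abs_le by (intro bounded_linear_intro[where K = K])
      (simp_all add: linear_add[OF h] linear_scale[OF h] mult.commute)
  then have "blinfun_apply (Blinfun h) = h" by (rule bounded_linear_Blinfun_apply)
  moreover have "norm (Blinfun h) \<le> K"
    using abs_le K \<open>blinfun_apply (Blinfun h) = h\<close> by (intro norm_blinfun_bound) auto
  ultimately show thesis using hg by (intro that[of "Blinfun h"]) auto
qed

section \<open>Subgradients of the norm and the dual problem\<close>

lemma subdiff_norm_iff:
  "\<mu> \<in> subdiff norm x \<longleftrightarrow> blinfun_apply \<mu> x = norm x \<and> (\<forall>z. blinfun_apply \<mu> z \<le> norm z)"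
proof
  assume "\<mu> \<in> subdiff norm x"
  then have sub: "blinfun_apply \<mu> z - blinfun_apply \<mu> x \<le> norm z - norm x" for z
    by (simp add: subdiff_def blinfun.diff_right)
  have "norm x \<le> blinfun_apply \<mu> x" using sub[of 0] by simp
  moreover have "blinfun_apply \<mu> x \<le> norm x" using sub[of "2 *\<^sub>R x"] by (simp add: blinfun.scaleR_right)
  ultimately show "blinfun_apply \<mu> x = norm x \<and> (\<forall>z. blinfun_apply \<mu> z \<le> norm z)"
    using sub by fastforce
next
  assume "blinfun_apply \<mu> x = norm x \<and> (\<forall>z. blinfun_apply \<mu> z \<le> norm z)"
  then show "\<mu> \<in> subdiff norm x" by (simp add: subdiff_def blinfun.diff_right)
qed

lemma linear_Lstar: "linear (Lstar \<nu>)"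
  by (rule linearI) (simp_all add: Lstar_def scaleR_add_left sum.distrib scaleR_sum_right)

lemma Lstar_axis: "Lstar \<nu> (axis j 1) = \<nu> j"
proof -
  have "axis j 1 $ i *\<^sub>R \<nu> i = (if i = j then \<nu> j else 0)" for i
    by (simp add: axis_def)
  then show ?thesis by (simp add: Lstar_def)
qed

lemma Lstar_eq_0_iff:
  assumes "lin_indep_family \<nu>"
  shows "Lstar \<nu> c = 0 \<longleftrightarrow> c = 0"
  using assms linear_0[OF linear_Lstar]
  unfolding lin_indep_family_def by (auto simp: Lstar_def vec_eq_iff)

lemma Mset_apply_Lstar:
  assumes "f \<in> Mset \<nu> y"
  shows "blinfun_apply f (Lstar \<nu> d) = d \<bullet> y"
  using assms by (simp add: Mset_def Lstar_def blinfun.sum_right blinfun.scaleR_right inner_vec_def)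

lemma dual_solution_iff_minimal:
  "dual_solution \<nu> y c \<longleftrightarrow>
     c \<bullet> y = 1 \<and> (\<forall>d. d \<bullet> y = 1 \<longrightarrow> norm (Lstar \<nu> c) \<le> norm (Lstar \<nu> d))"
proof -
  let ?F = "{norm (Lstar \<nu> d) | d. d \<bullet> y = 1}"
  have "bdd_below ?F" by (rule bdd_belowI[of _ 0]) auto
  show ?thesis
  proof
    assume "dual_solution \<nu> y c"
    then show "c \<bullet> y = 1 \<and> (\<forall>d. d \<bullet> y = 1 \<longrightarrow> norm (Lstar \<nu> c) \<le> norm (Lstar \<nu> d))"
      unfolding dual_solution_def using cInf_lower[OF _ \<open>bdd_below ?F\<close>] by auto
  next
    assume "c \<bullet> y = 1 \<and> (\<forall>d. d \<bullet> y = 1 \<longrightarrow> norm (Lstar \<nu> c) \<le> norm (Lstar \<nu> d))"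
    then show "dual_solution \<nu> y c"
      unfolding dual_solution_def by (intro conjI cInf_eq_minimum[symmetric]) auto
  qed
qed

lemma dual_solution_le_norm_Lstar:
  assumes "dual_solution \<nu> y c"
  shows "norm (Lstar \<nu> c) * (d \<bullet> y) \<le> norm (Lstar \<nu> d)"
proof (cases "d \<bullet> y > 0")
  case False
  then have "norm (Lstar \<nu> c) * (d \<bullet> y) \<le> 0" by (simp add: mult_nonneg_nonpos)
  then show ?thesis by (rule order_trans) simp
next
  case True
  have "((1 / (d \<bullet> y)) *\<^sub>R d) \<bullet> y = 1" using True by simp
  then have "norm (Lstar \<nu> c) \<le> norm (Lstar \<nu> ((1 / (d \<bullet> y)) *\<^sub>R d))"
    using assms by (simp add: dual_solution_iff_minimal)
  also have "\<dots> = norm (Lstar \<nu> d) / (d \<bullet> y)"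
    using True by (simp add: linear_scale[OF linear_Lstar])
  finally show ?thesis using True by (simp add: field_simps)
qed

lemma dual_solution_norming_functional:
  assumes sol: "dual_solution \<nu> y c"
  obtains \<mu> :: "'p::real_normed_vector \<Rightarrow>\<^sub>L real"
  where "\<And>d. blinfun_apply \<mu> (Lstar \<nu> d) = norm (Lstar \<nu> c) * (d \<bullet> y)" "norm \<mu> \<le> 1"
proof -
  define n where "n = norm (Lstar \<nu> c)"
  have bound: "n * (d \<bullet> y) \<le> norm (Lstar \<nu> d)" for d
    using dual_solution_le_norm_Lstar[OF sol] by (simp add: n_def)
  define g where "g z = n * (inv (Lstar \<nu>) z \<bullet> y)" for z
  have g_Lstar: "g (Lstar \<nu> d) = n * (d \<bullet> y)" for d
  proof -
    \<comment> \<open>the bound makes \<open>n \<langle>d, y\<rangle>\<close> depend on \<open>Lstar \<nu> d\<close> only\<close>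
    define e where "e = inv (Lstar \<nu>) (Lstar \<nu> d)"
    have "Lstar \<nu> e = Lstar \<nu> d" unfolding e_def by (rule f_inv_into_f) simp
    then have "Lstar \<nu> (e - d) = 0" and "Lstar \<nu> (d - e) = 0"
      by (simp_all add: linear_diff[OF linear_Lstar])
    then have "n * ((e - d) \<bullet> y) \<le> 0" and "n * ((d - e) \<bullet> y) \<le> 0"
      using bound[of "e - d"] bound[of "d - e"] by simp_all
    then have "n * (e \<bullet> y) = n * (d \<bullet> y)" unfolding inner_diff_left right_diff_distrib by linarith
    then show ?thesis by (simp add: g_def e_def)
  qed
  have "dominated_linear_on (range (Lstar \<nu>)) (\<lambda>x. 1 * norm x) g"
    unfolding dominated_linear_on_def
  proof (intro conjI ballI allI)
    show "subspace (range (Lstar \<nu>))"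
      by (rule linear_subspace_image[OF linear_Lstar subspace_UNIV])
  next
    fix a b assume "a \<in> range (Lstar \<nu>)" "b \<in> range (Lstar \<nu>)"
    then obtain d e where "a = Lstar \<nu> d" "b = Lstar \<nu> e" by blast
    then show "g (a + b) = g a + g b"
      by (simp add: g_Lstar inner_add_left distrib_left flip: linear_add[OF linear_Lstar])
  next
    fix a r assume "a \<in> range (Lstar \<nu>)"
    then obtain d where "a = Lstar \<nu> d" by blast
    then show "g (r *\<^sub>R a) = r * g a"
      by (simp add: g_Lstar flip: linear_scale[OF linear_Lstar])
  next
    fix a assume "a \<in> range (Lstar \<nu>)"
    then show "g a \<le> 1 * norm a" using bound by (auto simp: g_Lstar)
  qed
  then obtain \<mu> where \<mu>: "\<And>z. z \<in> range (Lstar \<nu>) \<Longrightarrow> blinfun_apply \<mu> z = g z" and "norm \<mu> \<le> 1"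
    using hahn_banach_blinfun[OF _ zero_le_one] by blast
  then show thesis using \<mu>[OF rangeI] g_Lstar by (intro that) (simp_all add: n_def)
qed

lemma dual_solution_imp_subdiff_Mset:
  assumes sol: "dual_solution \<nu> y c" and nz: "Lstar \<nu> c \<noteq> 0"
  obtains \<mu> where "\<mu> \<in> subdiff norm (Lstar \<nu> c)" "(1 / norm (Lstar \<nu> c)) *\<^sub>R \<mu> \<in> Mset \<nu> y"
proof -
  define n where "n = norm (Lstar \<nu> c)"
  have n: "n > 0" using nz by (simp add: n_def)
  obtain \<mu> where \<mu>: "\<And>d. blinfun_apply \<mu> (Lstar \<nu> d) = n * (d \<bullet> y)" and "norm \<mu> \<le> 1"
    using dual_solution_norming_functional[OF sol] by (auto simp: n_def)
  then have "blinfun_apply \<mu> z \<le> norm z" for z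
    using norm_blinfun[of \<mu> z] mult_right_mono[of "norm \<mu>" 1 "norm z"] by auto
  moreover have "blinfun_apply \<mu> (Lstar \<nu> c) = n"
    using \<mu> sol by (simp add: dual_solution_def)
  ultimately have "\<mu> \<in> subdiff norm (Lstar \<nu> c)" by (simp add: subdiff_norm_iff n_def)
  moreover have "(1 / n) *\<^sub>R \<mu> \<in> Mset \<nu> y"
  proof -
    have "blinfun_apply \<mu> (\<nu> j) = n * y $ j" for j
      using \<mu>[of "axis j 1"] by (simp add: Lstar_axis inner_axis')
    then show ?thesis using n by (simp add: Mset_def scaleR_blinfun.rep_eq)
  qed
  ultimately show thesis using that by (simp add: n_def)
qed

lemma subdiff_Mset_imp_dual_solution:
  assumes sub: "\<mu> \<in> subdiff norm (Lstar \<nu> c)"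
    and M: "(1 / norm (Lstar \<nu> c)) *\<^sub>R \<mu> \<in> Mset \<nu> y" and nz: "Lstar \<nu> c \<noteq> 0"
  shows "dual_solution \<nu> y c"
proof -
  define n where "n = norm (Lstar \<nu> c)"
  have n: "n > 0" using nz by (simp add: n_def)
  have \<mu>_c: "blinfun_apply \<mu> (Lstar \<nu> c) = n" and \<mu>_le: "\<And>z. blinfun_apply \<mu> z \<le> norm z"
    using sub by (simp_all add: subdiff_norm_iff n_def)
  have \<mu>_Lstar: "blinfun_apply \<mu> (Lstar \<nu> d) = n * (d \<bullet> y)" for d
    using Mset_apply_Lstar[OF M, of d] n by (simp add: scaleR_blinfun.rep_eq n_def field_simps)
  have "c \<bullet> y = 1" using \<mu>_Lstar[of c] \<mu>_c n by simp
  moreover have "n \<le> norm (Lstar \<nu> d)" if "d \<bullet> y = 1" for d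
    using \<mu>_Lstar[of d] \<mu>_le[of "Lstar \<nu> d"] that by simp
  ultimately show ?thesis by (simp add: dual_solution_iff_minimal n_def)
qed

theorem mainTheorem10:
  fixes \<nu> :: "'m::finite \<Rightarrow> 'p::real_normed_vector"
    and y c :: "real^'m"
  assumes "lin_indep_family \<nu>"
    and "y \<noteq> 0"
    and "c \<noteq> 0"
  shows "dual_solution \<nu> y c \<longleftrightarrow>
    ((\<lambda>f. (1 / norm (Lstar \<nu> c)) *\<^sub>R f) ` subdiff norm (Lstar \<nu> c)) \<inter> Mset \<nu> y \<noteq> {}"
proof -
  have nz: "Lstar \<nu> c \<noteq> 0" using Lstar_eq_0_iff assms(1,3) by blast
  show ?thesis
  proof
    assume "dual_solution \<nu> y c"
    then obtain \<mu> where "\<mu> \<in> subdiff norm (Lstar \<nu> c)" "(1 / norm (Lstar \<nu> c)) *\<^sub>R \<mu> \<in> Mset \<nu> y"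
      using dual_solution_imp_subdiff_Mset[OF _ nz] by blast
    then show "(\<lambda>f. (1 / norm (Lstar \<nu> c)) *\<^sub>R f) ` subdiff norm (Lstar \<nu> c) \<inter> Mset \<nu> y \<noteq> {}"
      by blast
  next
    assume "(\<lambda>f. (1 / norm (Lstar \<nu> c)) *\<^sub>R f) ` subdiff norm (Lstar \<nu> c) \<inter> Mset \<nu> y \<noteq> {}"
    then obtain \<mu> where "\<mu> \<in> subdiff norm (Lstar \<nu> c)" "(1 / norm (Lstar \<nu> c)) *\<^sub>R \<mu> \<in> Mset \<nu> y"
      by blast
    then show "dual_solution \<nu> y c" using subdiff_Mset_imp_dual_solution nz by blast
  qed
qed

end
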